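(* Consider the wireless network described in the context, with nodes sending independent codewords under decode-and-forward. Let $\mathcal{M}^{\mathrm{MSPA}}$ be the route output by the maximum sum-of-received-power algorithm (MSPA), with ties broken arbitrarily. Then $\mathcal{M}^{\mathrm{MSPA}}$ is optimal for DF, i.e., $$R_{\mathrm{DF}}(\mathcal{M}^{\mathrm{MSPA}})=R_{\mathrm{DF}}^{\max}.$$
   Context: Network: a finite set of nodes $\mathcal{S}=\{1,2,\dots,D\}$, $D\ge 2$. Node $1$ is the source and node $D$ is the destination. Received powers: for distinct nodes $i,t$, the power received at $t$ from $i$ is a positive real number $P_{it}$. All receivers have the same noise power $N>0$. Routes: a route is an ordered tuple of distinct nodes $\mathcal{M}=(m_1,\dots,m_L)$ with $m_1=1$ and $L\ge1$. It is a route from the source to the destination if moreover $m_L=D$. For $a\notin\mathcal{M}$, $\mathcal{M}\cup\{a\}$ denotes $(m_1,\dots,m_L,a)$. DF with independent codewords: the reception rate of node $m_t$ ($2\le t\le L$) in route $\mathcal{M}$ is $$R_{m_t}(\mathcal{M})=\tfrac12\log\Big(1+N^{-1}\sum_{i=1}^{t-1}P_{m_i m_t}\Big).$$ The supported DF rate (for $L\ge2$) is $R_{\mathrm{DF}}(\mathcal{M})=\min_{2\le t\le L}R_{m_t}(\mathcal{M})$. Also $R_{\mathrm{DF}}^{\max}=\max R_{\mathrm{DF}}(\mathcal{M})$ over all routes from $1$ to $D$. MSPA: 1. Start with $\mathcal{M}=(1)$. 2. Choose any node $a^*\in\mathcal{S}\setminus\mathcal{M}$ maximizing $\sum_{i\in\mathcal{M}}P_{it}$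 over $t\in\mathcal{S}\setminus\mathcal{M}$, and set $\mathcal{M}\leftarrow\mathcal{M}\cup\{a^*\}$. 3. Repeat step 2 until $D$ has been appended; output $\mathcal{M}$. *)

theory Defs
  imports Complex_Main
begin

text \<open>Nodes are 1..D; node 1 is the source, node D the destination.
  P i t is the power received at t from i; N is the noise power.
  A route is a list of distinct nodes starting with the source.\<close>

definition nodes :: "nat \<Rightarrow> nat set" where
  "nodes D = {1..D}"

definition is_route :: "nat \<Rightarrow> nat list \<Rightarrow> bool" where
  "is_route D M \<longleftrightarrow> M \<noteq> [] \<and> distinct M \<and> hd M = 1 \<and> set M \<subseteq> nodes D"

definition is_route_SD :: "nat \<Rightarrow> nat list \<Rightarrow> bool" where
  "is_route_SD D M \<longleftrightarrow> is_route D M \<and> last M = D"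

text \<open>Reception rate of the node at (0-based) position t of the route, 1 \<le> t < length M,
  i.e. node m_{t+1} in the paper's 1-based indexing.\<close>
definition rx_rate :: "(nat \<Rightarrow> nat \<Rightarrow> real) \<Rightarrow> real \<Rightarrow> nat list \<Rightarrow> nat \<Rightarrow> real" where
  "rx_rate P N M t = (1/2) * log 2 (1 + (\<Sum>i<t. P (M ! i) (M ! t)) / N)"

definition R_DF :: "(nat \<Rightarrow> nat \<Rightarrow> real) \<Rightarrow> real \<Rightarrow> nat list \<Rightarrow> real" where
  "R_DF P N M = Min (rx_rate P N M ` {1..<length M})"

definition R_DF_max :: "(nat \<Rightarrow> nat \<Rightarrow> real) \<Rightarrow> real \<Rightarrow> nat \<Rightarrow> real" where
  "R_DF_max P N D = Max (R_DF P N ` {M. is_route_SD D M})"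

text \<open>MSPA with arbitrary tie-breaking: all partial routes reachable by the algorithm.\<close>
inductive mspa_reach :: "(nat \<Rightarrow> nat \<Rightarrow> real) \<Rightarrow> nat \<Rightarrow> nat list \<Rightarrow> bool"
  for P :: "nat \<Rightarrow> nat \<Rightarrow> real" and D :: nat where
  start: "mspa_reach P D [1]"
| step: "\<lbrakk> mspa_reach P D M; D \<notin> set M; a \<in> nodes D - set M;
           \<forall>t \<in> nodes D - set M. (\<Sum>i\<in>set M. P i t) \<le> (\<Sum>i\<in>set M. P i a) \<rbrakk>
         \<Longrightarrow> mspa_reach P D (M @ [a])"

definition mspa_output :: "(nat \<Rightarrow> nat \<Rightarrow> real) \<Rightarrow> nat \<Rightarrow> nat list \<Rightarrow> bool" where
  "mspa_output P D M \<longleftrightarrow> mspa_reach P D M \<and> D \<in> set M"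

end

theory Submission
  imports Defs
begin

text \<open>
  Let \<open>M\<close> be an MSPA output and let position \<open>k\<close> be a bottleneck of \<open>M\<close>,
  i.e. \<open>R_DF P N M = rx_rate P N M k\<close>.  Put \<open>A = set (take k M)\<close>: the nodes chosen
  before \<open>M ! k\<close>.  Then \<open>1 \<in> A\<close>, \<open>D \<notin> A\<close>, and by the greedy rule every node outside
  \<open>A\<close> receives at most as much power from \<open>A\<close> as \<open>M ! k\<close> does.  Any route \<open>M'\<close> from
  source to destination must leave \<open>A\<close>; at its first node outside \<open>A\<close> it has received
  only from nodes of \<open>A\<close>, hence its rate there -- and so \<open>R_DF P N M'\<close> -- is at most
  the bottleneck rate of \<open>M\<close>.  Since \<open>M\<close> itself is a source-destination route, it
  attains the (finite) maximum.
\<close>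

lemma mspa_reach_route:
  assumes "mspa_reach P D M" and "D \<ge> 1"
  shows "is_route D M \<and> D \<notin> set (butlast M)"
  using assms
  by (induction rule: mspa_reach.induct) (auto simp: is_route_def nodes_def)

lemma mspa_reach_greedy:
  assumes "mspa_reach P D M" and "1 \<le> k" "k < length M"
    and "t \<in> nodes D - set (take k M)"
  shows "(\<Sum>i\<in>set (take k M). P i t) \<le> (\<Sum>i\<in>set (take k M). P i (M ! k))"
  using assms
proof (induction arbitrary: k rule: mspa_reach.induct)
  case start
  then show ?case by simp
next
  case (step M a)
  show ?case
  proof (cases "k < length M")
    case True
    then show ?thesis using step by (auto simp: nth_append)
  next
    case False
    then have "k = length M" using step.prems(2) by simp
    then show ?thesis using step by simp
  qed
qed

lemma mspa_output_route_SD: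
  assumes "mspa_output P D M" and "D \<ge> 1"
  shows "is_route_SD D M"
proof -
  have route: "is_route D M" and early: "D \<notin> set (butlast M)"
    using mspa_reach_route assms by (auto simp: mspa_output_def)
  have "D \<in> set M" using assms(1) by (simp add: mspa_output_def)
  then have "last M = D"
    using early by (cases M rule: rev_cases) auto
  then show ?thesis using route by (simp add: is_route_SD_def)
qed

text \<open>Shannon rate of a Gaussian channel with received power \<open>x\<close> and noise \<open>N\<close>.\<close>
definition capacity :: "real \<Rightarrow> real \<Rightarrow> real" where
  "capacity N x = (1/2) * log 2 (1 + x / N)"

lemma capacity_mono:
  assumes "N > 0" "0 \<le> x" "x \<le> y"
  shows "capacity N x \<le> capacity N y"
proof -
  have "x / N \<le> y / N" "0 \<le> x / N" using assms by (simp_all add: divide_right_mono)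
  then show ?thesis by (simp add: capacity_def)
qed

lemma sum_prefix_eq_sum_set:
  assumes "distinct xs" "t \<le> length xs"
  shows "(\<Sum>i<t. f (xs ! i)) = (\<Sum>x\<in>set (take t xs). f x)"
proof -
  have "set (take t xs) = (\<lambda>i. xs ! i) ` {..<t}"
    using assms(2) by (simp add: nth_image lessThan_atLeast0)
  moreover have "inj_on (\<lambda>i. xs ! i) {..<t}"
    using assms by (auto simp: inj_on_def nth_eq_iff_index_eq)
  ultimately show ?thesis by (simp add: sum.reindex)
qed

lemma rx_rate_capacity:
  assumes "distinct M" "t \<le> length M"
  shows "rx_rate P N M t = capacity N (\<Sum>x\<in>set (take t M). P x (M ! t))"
  using sum_prefix_eq_sum_set[OF assms, of "\<lambda>x. P x (M ! t)"]
  by (simp add: rx_rate_def capacity_def)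

text \<open>A route from the source to a different destination has at least two nodes,
  so its DF rate is a minimum over a nonempty set.\<close>
lemma route_SD_length:
  assumes "is_route_SD D M" "D \<noteq> 1"
  shows "length M \<ge> 2"
proof (rule ccontr)
  assume "\<not> length M \<ge> 2"
  moreover have "M \<noteq> []" using assms(1) by (simp add: is_route_SD_def is_route_def)
  ultimately have "length M = 1" by (cases "length M") auto
  then obtain x where "M = [x]" by (auto simp: length_Suc_conv)
  then show False using assms by (simp add: is_route_SD_def is_route_def)
qed

lemma finite_routes_SD: "finite {M. is_route_SD D M}"
proof (rule finite_subset)
  show "{M. is_route_SD D M} \<subseteq> {xs. set xs \<subseteq> nodes D \<and> length xs \<le> card (nodes D)}"
  proof
    fix xs assume "xs \<in> {M. is_route_SD D M}"
    then have "distinct xs" "set xs \<subseteq> nodes D" by (auto simp: is_route_SD_def is_route_def)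
    then show "xs \<in> {xs. set xs \<subseteq> nodes D \<and> length xs \<le> card (nodes D)}"
      using card_mono[of "nodes D" "set xs"] by (auto simp: nodes_def distinct_card[symmetric])
  qed
  show "finite {xs. set xs \<subseteq> nodes D \<and> length xs \<le> card (nodes D)}"
    by (rule finite_lists_length_le) (simp add: nodes_def)
qed

lemma R_DF_le_rx_rate:
  assumes "1 \<le> j" "j < length M"
  shows "R_DF P N M \<le> rx_rate P N M j"
  unfolding R_DF_def using assms by (intro Min_le) auto

lemma R_DF_bottleneck:
  assumes "length M \<ge> 2"
  obtains k where "1 \<le> k" "k < length M" "R_DF P N M = rx_rate P N M k"
proof -
  have "R_DF P N M \<in> rx_rate P N M ` {1..<length M}"
    unfolding R_DF_def using assms by (intro Min_in) auto
  then show ?thesis using that by auto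
qed

lemma route_first_exit:
  assumes "M \<noteq> []" "hd M \<in> A" "last M \<notin> A"
  obtains j where "1 \<le> j" "j < length M" "M ! j \<notin> A" "set (take j M) \<subseteq> A"
proof -
  define j where "j = (LEAST j. j < length M \<and> M ! j \<notin> A)"
  have ex: "\<exists>j. j < length M \<and> M ! j \<notin> A"
    using assms by (metis diff_less last_conv_nth length_greater_0_conv less_one)
  have j: "j < length M" "M ! j \<notin> A" using LeastI_ex[OF ex] unfolding j_def by auto
  have "M ! i \<in> A" if "i < j" for i
    using not_less_Least[of i "\<lambda>j. j < length M \<and> M ! j \<notin> A"] that j
    unfolding j_def by auto
  then have prefix: "set (take j M) \<subseteq> A" using j by (auto simp: in_set_conv_nth)
  have "j \<noteq> 0" using j assms by (metis hd_conv_nth)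
  then show ?thesis using that[OF _ j prefix] by simp
qed

lemma R_DF_cut_bound:
  assumes "N > 0"
    and nonneg: "\<And>i t. i \<in> nodes D \<Longrightarrow> t \<in> nodes D \<Longrightarrow> i \<noteq> t \<Longrightarrow> 0 \<le> P i t"
    and "A \<subseteq> nodes D" "1 \<in> A" "D \<notin> A"
    and max_b: "\<forall>t\<in>nodes D - A. (\<Sum>i\<in>A. P i t) \<le> (\<Sum>i\<in>A. P i b)"
    and route: "is_route_SD D M'"
  shows "R_DF P N M' \<le> capacity N (\<Sum>i\<in>A. P i b)"
proof -
  have M': "M' \<noteq> []" "distinct M'" "hd M' = 1" "set M' \<subseteq> nodes D" "last M' = D"
    using route by (auto simp: is_route_SD_def is_route_def)
  obtain j where j: "1 \<le> j" "j < length M'" "M' ! j \<notin> A" and before: "set (take j M') \<subseteq> A"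
    using route_first_exit[of M' A] M' assms(4,5) by auto
  let ?c = "M' ! j"
  have c: "?c \<in> nodes D - A" using j M' by auto
  have nonneg_A: "0 \<le> P x ?c" if "x \<in> A" for x
    using nonneg that c assms(3) by blast
  have "0 \<le> (\<Sum>x\<in>set (take j M'). P x ?c)"
    using before nonneg_A by (intro sum_nonneg) auto
  moreover have "(\<Sum>x\<in>set (take j M'). P x ?c) \<le> (\<Sum>x\<in>A. P x ?c)"
    using before nonneg_A assms(3) by (intro sum_mono2) (auto simp: nodes_def finite_subset)
  moreover have "(\<Sum>x\<in>A. P x ?c) \<le> (\<Sum>i\<in>A. P i b)"
    using max_b c by blast
  ultimately have "rx_rate P N M' j \<le> capacity N (\<Sum>i\<in>A. P i b)"
    using rx_rate_capacity[of M' j P N] M'(2) j(2) capacity_mono[OF \<open>N > 0\<close>] by simp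
  then show ?thesis using R_DF_le_rx_rate[OF j(1,2), of P N] by linarith
qed

theorem theorem3:
  fixes P :: "nat \<Rightarrow> nat \<Rightarrow> real" and N :: real and D :: nat and M :: "nat list"
  assumes "D \<ge> 2"
    and "N > 0"
    and "\<forall>i\<in>nodes D. \<forall>t\<in>nodes D. i \<noteq> t \<longrightarrow> P i t > 0"
    and "mspa_output P D M"
  shows "R_DF P N M = R_DF_max P N D"
proof -
  have route: "is_route_SD D M" using mspa_output_route_SD assms(1,4) by simp
  then have M: "distinct M" "hd M = 1" "set M \<subseteq> nodes D" "D \<notin> set (butlast M)"
    using mspa_reach_route[of P D M] assms(1,4)
    by (auto simp: is_route_SD_def is_route_def mspa_output_def)
  have "length M \<ge> 2" using route_SD_length[OF route] assms(1) by simp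
  then obtain k where k: "1 \<le> k" "k < length M" and bottleneck: "R_DF P N M = rx_rate P N M k"
    using R_DF_bottleneck by blast
  define A where "A = set (take k M)"
  have "M \<noteq> []" using k by auto
  then have "M ! 0 = 1" using M(2) by (simp add: hd_conv_nth)
  then have source: "1 \<in> A" using k unfolding A_def by (auto simp: in_set_conv_nth intro!: exI[of _ 0])
  have dest: "D \<notin> A"
    using k M(4) take_butlast[of k M] in_set_takeD[of D k "butlast M"] unfolding A_def by auto
  have "A \<subseteq> nodes D" using order.trans[OF set_take_subset M(3)] unfolding A_def .
  moreover have "\<forall>t\<in>nodes D - A. (\<Sum>i\<in>A. P i t) \<le> (\<Sum>i\<in>A. P i (M ! k))"
    using mspa_reach_greedy[of P D M k] assms(4) k unfolding A_def mspa_output_def by blast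
  moreover have "\<And>i t. i \<in> nodes D \<Longrightarrow> t \<in> nodes D \<Longrightarrow> i \<noteq> t \<Longrightarrow> 0 \<le> P i t"
    using assms(3) by (simp add: less_imp_le)
  ultimately have cut: "R_DF P N M' \<le> capacity N (\<Sum>i\<in>A. P i (M ! k))"
    if "is_route_SD D M'" for M'
    using R_DF_cut_bound[OF assms(2) _ _ source dest _ that] by blast
  have "R_DF P N M = capacity N (\<Sum>i\<in>A. P i (M ! k))"
    using bottleneck rx_rate_capacity[of M k P N] M(1) k(2) unfolding A_def by simp
  then have optimal: "R_DF P N M' \<le> R_DF P N M" if "is_route_SD D M'" for M'
    using cut[OF that] by simp
  show ?thesis unfolding R_DF_max_def
    using finite_routes_SD route optimal by (intro Max_eqI[symmetric]) auto
qed

end
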